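(* Let $C'\subseteq C\subseteq\mathbb{R}^n$ be nonempty polyhedra. Then for every lazy expression $E$, $\mathrm{LB}(E,C')\ge\mathrm{LB}(E,C)$ and $\mathrm{UB}(E,C')\le\mathrm{UB}(E,C)$.
   Context: Lazy (scalar) expressions are generated by $E::=\mathtt{Affine}(w,b)\mid\mathtt{Sum}(\{E_1,\dots,E_k\})\mid\mathtt{Max}(\{E_1,\dots,E_k\})\mid\mathtt{Scale}(c,E)\mid\mathtt{Bias}(b,E)$ ($w\in\mathbb{R}^n$, $b,c\in\mathbb{R}$). A polyhedron is a finite intersection of closed halfspaces. The bounds (values in $\mathbb{R}\cup\{\pm\infty\}$, with $0\cdot(\pm\infty)=0$) are defined recursively: $\mathrm{LB}(\mathtt{Affine}(w,b),C)=\inf_{x\in C}(w^\top x+b)$, $\mathrm{UB}(\mathtt{Affine}(w,b),C)=\sup_{x\in C}(w^\top x+b)$; $\mathrm{LB}/\mathrm{UB}$ of $\mathtt{Sum}$ are the sums of the children's $\mathrm{LB}$/$\mathrm{UB}$; $\mathrm{LB}(\mathtt{Scale}(c,E),C)=c\,\mathrm{LB}(E,C)$ if $c\ge0$ and $c\,\mathrm{UB}(E,C)$ if $c<0$, $\mathrm{UB}(\mathtt{Scale}(c,E),C)=c\,\mathrm{UB}(E,C)$ if $c\ge0$ and $c\,\mathrm{LB}(E,C)$ if $c<0$; $\mathrm{LB}/\mathrm{UB}(\mathtt{Bias}(b,E),C)=\mathrm{LB}/\mathrm{UB}(E,C)+b$; $\mathrm{LB}(\mathtt{Max}(\{E_i\}),C)=\max_i\mathrm{LB}(E_i,C)$,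 $\mathrm{UB}(\mathtt{Max}(\{E_i\}),C)=\max_i\mathrm{UB}(E_i,C)$. *)

theory Defs
  imports "HOL-Analysis.Analysis" "HOL-Library.Extended_Real"
begin

text \<open>Lazy scalar expressions over inputs in real^'n.  The finite families of
children of Sum and Max are represented as lists.\<close>

datatype 'n lexpr =
    Affine "real ^ 'n" real
  | LSum "'n lexpr list"
  | LMax "'n lexpr list"
  | Scale real "'n lexpr"
  | Bias real "'n lexpr"

definition halfspace :: "real ^ 'n \<Rightarrow> real \<Rightarrow> (real ^ 'n) set" where
  "halfspace a \<beta> = {x. a \<bullet> x \<le> \<beta>}"

definition polyhedron :: "(real ^ 'n) set \<Rightarrow> bool" where
  "polyhedron C \<longleftrightarrow> (\<exists>H. finite H \<and> C = (\<Inter>(a, \<beta>)\<in>H. halfspace a \<beta>))"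

text \<open>Bounds in ereal; note that in ereal, 0 * (+/-\<infinity>) = 0.\<close>

fun LB :: "'n lexpr \<Rightarrow> (real ^ 'n) set \<Rightarrow> ereal"
and UB :: "'n lexpr \<Rightarrow> (real ^ 'n) set \<Rightarrow> ereal" where
  "LB (Affine w b) C = (INF x\<in>C. ereal (w \<bullet> x + b))"
| "LB (LSum Es) C = sum_list (map (\<lambda>E. LB E C) Es)"
| "LB (LMax Es) C = foldr max (map (\<lambda>E. LB E C) Es) (-\<infinity>)"
| "LB (Scale c E) C = (if c \<ge> 0 then ereal c * LB E C else ereal c * UB E C)"
| "LB (Bias b E) C = LB E C + ereal b"
| "UB (Affine w b) C = (SUP x\<in>C. ereal (w \<bullet> x + b))"
| "UB (LSum Es) C = sum_list (map (\<lambda>E. UB E C) Es)"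
| "UB (LMax Es) C = foldr max (map (\<lambda>E. UB E C) Es) (-\<infinity>)"
| "UB (Scale c E) C = (if c \<ge> 0 then ereal c * UB E C else ereal c * LB E C)"
| "UB (Bias b E) C = UB E C + ereal b"

end

theory Submission
  imports Defs
begin

text \<open>Every constructor acts monotonically on the bounds of its children, except
\<open>Scale\<close> with a negative factor, which is antitone and exchanges \<open>LB\<close> and \<open>UB\<close>.
Hence \<open>LB\<close> and \<open>UB\<close> must be treated together, by structural induction on the
expression; at the leaves, shrinking the domain can only raise an infimum and
lower a supremum.\<close>

lemma foldr_max_map_mono:
  fixes f g :: "'a \<Rightarrow> 'b::linorder"
  assumes "\<And>x. x \<in> set xs \<Longrightarrow> f x \<le> g x"
  shows "foldr max (map f xs) z \<le> foldr max (map g xs) z"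
  using assms by (induction xs) (simp_all add: max.coboundedI1 max.coboundedI2)

lemma ereal_mult_left_antimono:
  fixes a b :: ereal
  assumes "c \<le> 0" and "a \<le> b"
  shows "ereal c * b \<le> ereal c * a"
  using assms by (cases a; cases b) (auto simp: mult_left_mono_neg)

lemma LB_UB_antimono:
  assumes "C' \<subseteq> C"
  shows "LB E C \<le> LB E C' \<and> UB E C' \<le> UB E C"
proof (induction E)
  case (Affine w b)
  show ?case using assms by (auto intro: INF_superset_mono SUP_subset_mono)
next
  case (LSum Es)
  then show ?case by (auto intro!: sum_list_mono)
next
  case (LMax Es)
  then show ?case by (auto intro!: foldr_max_map_mono)
next
  case (Scale c E)
  then show ?case by (auto intro: ereal_mult_left_mono ereal_mult_left_antimono)
next
  case (Bias b E)
  then show ?case by (auto intro: add_right_mono)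
qed

theorem mainTheorem7:
  fixes C C' :: "(real ^ 'n) set" and E :: "'n lexpr"
  assumes "polyhedron C" and "polyhedron C'"
    and "C' \<noteq> {}" and "C' \<subseteq> C"
  shows "LB E C' \<ge> LB E C \<and> UB E C' \<le> UB E C"
  using LB_UB_antimono[OF \<open>C' \<subseteq> C\<close>] by simp

end
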